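(* Let $h$ and $k$ be positive integers. If $a$ and $\ell$ are positive integers such that $k = a\ell$, then the sumset size set $\mathcal{R}_{\mathbf{Z}}(h,k)$ contains the arithmetic progression \[ \left\{ (\ell-1)hb + (a-1)h + 1 : b \in [a,(a-1)h+1] \right\}. \]
   Context: For a positive integer $h$ and a finite set $A$ of integers, $hA$ denotes the set of all sums $a_1+\cdots+a_h$ with $a_1,\ldots,a_h \in A$ (not necessarily distinct). The sumset size set is $\mathcal{R}_{\mathbf{Z}}(h,k) = \{ |hA| : A \subseteq \mathbf{Z},\ |A| = k\}$. For real $u,v$, $[u,v] = \{n \in \mathbf{Z} : u \le n \le v\}$. *)

theory Defs
  imports Main
begin

definition hfold_sumset :: "nat \<Rightarrow> int set \<Rightarrow> int set" where
  "hfold_sumset h A = {(\<Sum>i<h. f i) | f. \<forall>i<h. f i \<in> A}"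

definition sumset_sizes :: "nat \<Rightarrow> nat \<Rightarrow> nat set" where
  "sumset_sizes h k = {card (hfold_sumset h A) | A. finite A \<and> card A = k}"

end

theory Submission
  imports Defs "HOL-Library.Set_Algebras"
begin

text \<open>
  Take \<open>A = [0, a-1] + b\<cdot>[0, l-1]\<close> with \<open>a \<le> b\<close>: since the "digits" \<open>[0, a-1]\<close> lie below
  the base \<open>b\<close>, \<open>|A| = a l\<close>. The \<open>h\<close>-fold sumset commutes with sums and dilations of sets,
  so \<open>hA = [0, h(a-1)] + b\<cdot>[0, h(l-1)]\<close>, and this is the full interval
  \<open>[0, h(a-1) + b h(l-1)]\<close> as soon as the gap \<open>b\<close> between consecutive translates of
  \<open>[0, h(a-1)]\<close> is at most \<open>h(a-1) + 1\<close>.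
\<close>

lemma bounded_summands_exist:
  fixes X c :: nat
  assumes "X \<le> h * c"
  shows "\<exists>f. (\<forall>i<h. f i \<le> c) \<and> (\<Sum>i<h. f i) = X"
  using assms
proof (induction h arbitrary: X)
  case 0
  then show ?case by auto
next
  case (Suc h)
  have "X - min c X \<le> h * c" using Suc.prems by auto
  then obtain f where f: "\<forall>i<h. f i \<le> c" "(\<Sum>i<h. f i) = X - min c X"
    using Suc.IH by blast
  define g where "g = f(h := min c X)"
  have "(\<Sum>i<h. g i) = (\<Sum>i<h. f i)" unfolding g_def by (intro sum.cong) auto
  then have "(\<Sum>i<Suc h. g i) = (\<Sum>i<h. f i) + min c X" by (simp add: g_def)
  then have "(\<Sum>i<Suc h. g i) = X" using f(2) by simp
  moreover have "\<forall>i<Suc h. g i \<le> c" using f(1) by (auto simp: g_def less_Suc_eq)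
  ultimately show ?case by blast
qed

lemma hfold_sumset_set_plus:
  "hfold_sumset h (A + B) = hfold_sumset h A + hfold_sumset h B"
proof
  show "hfold_sumset h (A + B) \<subseteq> hfold_sumset h A + hfold_sumset h B"
  proof
    fix s assume "s \<in> hfold_sumset h (A + B)"
    then obtain f where s: "s = (\<Sum>i<h. f i)" and f: "\<forall>i<h. f i \<in> A + B"
      unfolding hfold_sumset_def by blast
    then have "\<forall>i<h. \<exists>x y. x \<in> A \<and> y \<in> B \<and> f i = x + y"
      unfolding set_plus_def by blast
    then obtain g g' where g: "\<forall>i<h. g i \<in> A \<and> g' i \<in> B \<and> f i = g i + g' i"
      by metis
    then have "s = (\<Sum>i<h. g i) + (\<Sum>i<h. g' i)"
      unfolding s by (simp add: sum.distrib[symmetric])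
    moreover have "(\<Sum>i<h. g i) \<in> hfold_sumset h A" "(\<Sum>i<h. g' i) \<in> hfold_sumset h B"
      using g unfolding hfold_sumset_def by blast+
    ultimately show "s \<in> hfold_sumset h A + hfold_sumset h B" by blast
  qed
next
  show "hfold_sumset h A + hfold_sumset h B \<subseteq> hfold_sumset h (A + B)"
  proof
    fix s assume "s \<in> hfold_sumset h A + hfold_sumset h B"
    then obtain g g' where s: "s = (\<Sum>i<h. g i) + (\<Sum>i<h. g' i)"
      and "\<forall>i<h. g i \<in> A" "\<forall>i<h. g' i \<in> B"
      unfolding hfold_sumset_def by (auto elim!: set_plus_elim)
    then have "s = (\<Sum>i<h. g i + g' i) \<and> (\<forall>i<h. g i + g' i \<in> A + B)"
      by (simp add: sum.distrib set_plus_intro)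
    then show "s \<in> hfold_sumset h (A + B)"
      unfolding hfold_sumset_def by blast
  qed
qed

lemma hfold_sumset_elt_set_times:
  "hfold_sumset h (c *o A) = c *o hfold_sumset h A"
proof
  show "hfold_sumset h (c *o A) \<subseteq> c *o hfold_sumset h A"
  proof
    fix s assume "s \<in> hfold_sumset h (c *o A)"
    then obtain f where s: "s = (\<Sum>i<h. f i)" and "\<forall>i<h. \<exists>x\<in>A. f i = c * x"
      unfolding hfold_sumset_def elt_set_times_def by blast
    then obtain g where g: "\<forall>i<h. g i \<in> A \<and> f i = c * g i" by metis
    then have "s = c * (\<Sum>i<h. g i)" unfolding s by (simp add: sum_distrib_left)
    moreover have "(\<Sum>i<h. g i) \<in> hfold_sumset h A"
      using g unfolding hfold_sumset_def by blast
    ultimately show "s \<in> c *o hfold_sumset h A" by blast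
  qed
next
  show "c *o hfold_sumset h A \<subseteq> hfold_sumset h (c *o A)"
    unfolding hfold_sumset_def elt_set_times_def by (force simp: sum_distrib_left)
qed

lemma hfold_sumset_atLeastAtMost:
  fixes c :: int
  assumes "0 \<le> c"
  shows "hfold_sumset h {0..c} = {0..int h * c}"
proof
  show "hfold_sumset h {0..c} \<subseteq> {0..int h * c}"
  proof
    fix s assume "s \<in> hfold_sumset h {0..c}"
    then obtain f where s: "s = (\<Sum>i<h. f i)" and f: "\<forall>i<h. f i \<in> {0..c}"
      unfolding hfold_sumset_def by blast
    have "0 \<le> s" unfolding s using f by (intro sum_nonneg) auto
    moreover have "s \<le> of_nat (card {..<h}) * c"
      unfolding s using f by (intro sum_bounded_above) auto
    ultimately show "s \<in> {0..int h * c}" by simp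
  qed
next
  show "{0..int h * c} \<subseteq> hfold_sumset h {0..c}"
  proof
    fix s assume "s \<in> {0..int h * c}"
    then have "nat s \<le> h * nat c" using assms by (simp add: nat_le_iff nat_mult_distrib)
    then obtain f where f: "\<forall>i<h. f i \<le> nat c" "(\<Sum>i<h. f i) = nat s"
      using bounded_summands_exist by blast
    have "s = (\<Sum>i<h. int (f i))" using f(2) \<open>s \<in> {0..int h * c}\<close> by (simp flip: of_nat_sum)
    moreover have "\<forall>i<h. int (f i) \<in> {0..c}" using f(1) assms by (simp add: le_nat_iff)
    ultimately show "s \<in> hfold_sumset h {0..c}" unfolding hfold_sumset_def by blast
  qed
qed

lemma atLeastAtMost_plus_dilated_atLeastAtMost:
  fixes b m n :: int
  assumes "0 < b" "b \<le> m + 1" "0 \<le> n"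
  shows "{0..m} + b *o {0..n} = {0..m + b * n}"
proof
  show "{0..m} + b *o {0..n} \<subseteq> {0..m + b * n}"
  proof
    fix s assume "s \<in> {0..m} + b *o {0..n}"
    then obtain x y where "s = x + b * y" "0 \<le> x" "x \<le> m" "0 \<le> y" "y \<le> n"
      unfolding elt_set_times_def by (auto elim!: set_plus_elim)
    moreover have "0 \<le> b * y" "b * y \<le> b * n" using \<open>0 \<le> y\<close> \<open>y \<le> n\<close> assms(1) by simp_all
    ultimately show "s \<in> {0..m + b * n}" by simp
  qed
next
  show "{0..m + b * n} \<subseteq> {0..m} + b *o {0..n}"
  proof
    fix s assume s: "s \<in> {0..m + b * n}"
    define y where "y = min (s div b) n"
    have "b * y \<le> b * (s div b)" using assms(1) by (simp add: y_def)
    also have "\<dots> \<le> s"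
      using pos_mod_sign[OF assms(1), of s] by (simp add: minus_mod_eq_mult_div[symmetric])
    finally have "0 \<le> s - b * y" by simp
    moreover have "s - b * y \<le> m"
    proof (cases "s div b \<le> n")
      case True
      then have "s - b * y = s mod b" by (simp add: y_def minus_mult_div_eq_mod)
      then show ?thesis using assms(2) pos_mod_bound[OF assms(1), of s] by linarith
    next
      case False
      then show ?thesis using s by (simp add: y_def)
    qed
    moreover have "y \<in> {0..n}"
      using assms s by (simp add: y_def pos_imp_zdiv_nonneg_iff)
    ultimately have "s - b * y \<in> {0..m}" "b * y \<in> b *o {0..n}"
      by (simp_all add: set_times_intro2)
    then have "(s - b * y) + b * y \<in> {0..m} + b *o {0..n}" by (rule set_plus_intro)
    then show "s \<in> {0..m} + b *o {0..n}" by simp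
  qed
qed

lemma card_set_plus_elt_set_times:
  fixes b :: int
  assumes "A \<subseteq> {0..<b}"
  shows "card (A + b *o Y) = card A * card Y"
proof -
  have "A + b *o Y = (\<lambda>(x, y). x + b * y) ` (A \<times> Y)"
    by (force simp: set_plus_def elt_set_times_def)
  moreover have "inj_on (\<lambda>(x, y). x + b * y) (A \<times> Y)"
  proof (rule inj_onI, clarify)
    fix x y x' y' assume "x \<in> A" "x' \<in> A" and eq: "x + b * y = x' + b * y'"
    then have "0 \<le> x" "x < b" "0 \<le> x'" "x' < b" using assms by auto
    then have "x = (x + b * y) mod b" "x' = (x' + b * y') mod b" by simp_all
    then have "x = x'" using eq by simp
    then show "x = x' \<and> y = y'" using eq \<open>0 \<le> x\<close> \<open>x < b\<close> by auto
  qed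
  ultimately show ?thesis by (simp add: card_image card_cartesian_product)
qed

lemma hfold_sumset_atLeastAtMost_plus_dilated_atLeastAtMost:
  fixes b m n :: int
  assumes "0 < b" "b \<le> int h * m + 1" "0 \<le> m" "0 \<le> n"
  shows "hfold_sumset h ({0..m} + b *o {0..n}) = {0..int h * m + b * (int h * n)}"
  using assms
  by (simp add: hfold_sumset_set_plus hfold_sumset_elt_set_times hfold_sumset_atLeastAtMost
      atLeastAtMost_plus_dilated_atLeastAtMost)

theorem mainTheorem3:
  fixes h k a l :: nat
  assumes "h \<ge> 1" and "k \<ge> 1" and "a \<ge> 1" and "l \<ge> 1" and "k = a * l"
  shows "{(l - 1) * h * b + (a - 1) * h + 1 | b. a \<le> b \<and> b \<le> (a - 1) * h + 1}
           \<subseteq> sumset_sizes h k"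
proof
  fix t assume "t \<in> {(l - 1) * h * b + (a - 1) * h + 1 | b. a \<le> b \<and> b \<le> (a - 1) * h + 1}"
  then obtain b where t: "t = (l - 1) * h * b + (a - 1) * h + 1"
    and "a \<le> b" and "b \<le> (a - 1) * h + 1" by blast
  define A where "A = {0..int a - 1} + int b *o {0..int l - 1}"
  have "finite A" unfolding A_def elt_set_times_def by (simp add: finite_set_plus)
  moreover have "card A = k"
    unfolding A_def using \<open>a \<le> b\<close> assms(5)
    by (subst card_set_plus_elt_set_times) auto
  moreover have "card (hfold_sumset h A) = t"
  proof -
    have "int b \<le> int ((a - 1) * h + 1)" using \<open>b \<le> (a - 1) * h + 1\<close> by linarith
    then have "hfold_sumset h A = {0..int h * (int a - 1) + int b * (int h * (int l - 1))}"
      unfolding A_def using assms \<open>a \<le> b\<close>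
      by (subst hfold_sumset_atLeastAtMost_plus_dilated_atLeastAtMost) (simp_all add: mult.commute)
    also have "int h * (int a - 1) + int b * (int h * (int l - 1)) = int (t - 1)"
      using assms unfolding t by simp
    finally show ?thesis unfolding t by (simp del: of_nat_add of_nat_mult)
  qed
  ultimately show "t \<in> sumset_sizes h k" unfolding sumset_sizes_def by blast
qed

end
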